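(* Let $\Omega$ be a bounded domain in $\mathbb{R}^n$, $p\geq 1$, and let $f$ satisfy the standing assumptions. Let $\nu\in\mathcal{P}(\Omega)$ be of the form $\nu=\nu^s+v\cdot\mathcal{L}^n$ with $\nu^s\perp\mathcal{L}^n$, $v\in L^\infty(\Omega)$ and $v>0$ a.e. in $\Omega$. If $\mu=u\cdot\mathcal{L}^n$ minimizes $\mathfrak{F}^p_\nu$ over $\mathcal{P}(\Omega)$, then $u>0$ a.e. in $\Omega$.
   Context: A bounded domain is a bounded set $\Omega\subset\mathbb{R}^n$ which is the closure of a nonempty connected open set and whose boundary is Lebesgue-negligible. $\mathcal{P}(\Omega)$ is the set of Borel probability measures on $\Omega$. Standing assumptions on $f$: $f:[0,+\infty)\to[0,+\infty)$ is strictly convex and $C^1$, $f(0)=0$, $f'(0)=0$, and $\lim_{t\to+\infty}f(t)/t=+\infty$. $T_p(\mu,\nu)=\inf_\gamma\int|x-y|^p\,d\gamma$ over transport plans $\gamma$ (probability measures on $\Omega\times\Omega$ with marginals $\mu,\nu$). $F(\mu)=\int_\Omega f(u)\,dx$ if $\mu=u\cdot\mathcal{L}^n$, $+\infty$ otherwise. $\mathfrak{F}^p_\nu(\mu)=T_p(\mu,\nu)+F(\mu)$. *)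

theory Defs
  imports "HOL-Analysis.Analysis" "HOL-Probability.Probability"
begin

definition strictly_convex_on :: "real set \<Rightarrow> (real \<Rightarrow> real) \<Rightarrow> bool" where
  "strictly_convex_on S f \<longleftrightarrow>
     (\<forall>x\<in>S. \<forall>y\<in>S. x \<noteq> y \<longrightarrow>
        (\<forall>t::real. 0 < t \<and> t < 1 \<longrightarrow> f ((1 - t) * x + t * y) < (1 - t) * f x + t * f y))"

definition bounded_domain :: "'a::euclidean_space set \<Rightarrow> bool" where
  "bounded_domain \<Omega> \<longleftrightarrow> bounded \<Omega> \<and>
     (\<exists>U. open U \<and> connected U \<and> U \<noteq> {} \<and> \<Omega> = closure U) \<and>
     frontier \<Omega> \<in> null_sets lborel"

definition standing_f :: "(real \<Rightarrow> real) \<Rightarrow> bool" where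
  "standing_f f \<longleftrightarrow>
     (\<forall>t\<ge>0. f t \<ge> 0) \<and> strictly_convex_on {0..} f \<and>
     (\<exists>f'. (\<forall>t\<ge>0. (f has_real_derivative f' t) (at t within {0..})) \<and>
           continuous_on {0..} f' \<and> f' 0 = 0) \<and>
     f 0 = 0 \<and> filterlim (\<lambda>t. f t / t) at_top at_top"

text \<open>Borel probability measures on \<Omega>, represented as Borel probability measures
  on the ambient space concentrated on \<Omega>.\<close>
definition probs_on :: "'a::euclidean_space set \<Rightarrow> 'a measure set" where
  "probs_on \<Omega> = {\<mu>. sets \<mu> = sets borel \<and> prob_space \<mu> \<and> emeasure \<mu> (UNIV - \<Omega>) = 0}"

definition transport_plans :: "'a::euclidean_space measure \<Rightarrow> 'a measure \<Rightarrow> ('a \<times> 'a) measure set" where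
  "transport_plans \<mu> \<nu> = {\<gamma>. sets \<gamma> = sets borel \<and> prob_space \<gamma> \<and>
      distr \<gamma> borel fst = \<mu> \<and> distr \<gamma> borel snd = \<nu>}"

definition Tp :: "real \<Rightarrow> 'a::euclidean_space measure \<Rightarrow> 'a measure \<Rightarrow> ennreal" where
  "Tp p \<mu> \<nu> = (INF \<gamma> \<in> transport_plans \<mu> \<nu>.
      \<integral>\<^sup>+ z. ennreal (dist (fst z) (snd z) powr p) \<partial>\<gamma>)"

text \<open>Internal energy: \<integral>_\<Omega> f(u) dx if \<mu> = u L^n, +\<infinity> otherwise
  (infimum over the empty set of densities is \<infinity>).\<close>
definition Fen :: "(real \<Rightarrow> real) \<Rightarrow> 'a::euclidean_space set \<Rightarrow> 'a measure \<Rightarrow> ennreal" where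
  "Fen f \<Omega> \<mu> = (INF u \<in> {u. u \<in> borel_measurable lborel \<and> (\<forall>x. u x \<ge> 0) \<and>
                         \<mu> = density lborel (\<lambda>x. ennreal (u x))}.
      \<integral>\<^sup>+ x. indicator \<Omega> x * ennreal (f (u x)) \<partial>lborel)"

definition functional :: "real \<Rightarrow> (real \<Rightarrow> real) \<Rightarrow> 'a::euclidean_space set \<Rightarrow> 'a measure \<Rightarrow> 'a measure \<Rightarrow> ennreal" where
  "functional p f \<Omega> \<nu> \<mu> = Tp p \<mu> \<nu> + Fen f \<Omega> \<mu>"

definition singular_lebesgue :: "'a::euclidean_space measure \<Rightarrow> bool" where
  "singular_lebesgue \<nu>s \<longleftrightarrow> (\<exists>N \<in> sets borel. N \<in> null_sets lborel \<and> emeasure \<nu>s (UNIV - N) = 0)"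

end

theory Submission
  imports Defs
begin

text \<open>Suppose \<open>u\<close> vanishes on a subset of \<open>\<Omega>\<close> of positive measure. It contains a compact \<open>K\<close>
  of positive measure, disjoint from the support of \<open>\<nu>\<^sup>s\<close>, on which \<open>u = 0\<close> and \<open>a \<le> v \<le> C\<close>.
  As \<open>\<mu>(K) = 0\<close> but \<open>\<nu>(K) \<ge> a |K| > 0\<close>, every transport plan from \<open>\<mu>\<close> to \<open>\<nu>\<close> moves mass
  over a distance at least some \<open>r > 0\<close> into \<open>K\<close>, so the part of its cost ending in \<open>K\<close> is at
  least some \<open>c > 0\<close>. Putting an \<open>\<epsilon>\<close>-fraction of the mass that ends in \<open>K\<close> on the diagonal lowers
  the cost of a nearly optimal plan by \<open>\<epsilon> c\<close>, while the new first marginal has density at most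
  \<open>u\<close> off \<open>K\<close> and at most \<open>\<epsilon> C\<close> on \<open>K\<close>. Since \<open>f'(0) = 0\<close>, the internal energy grows by at most
  \<open>|K| f(\<epsilon> C) = o(\<epsilon>)\<close>, so for small \<open>\<epsilon>\<close> the functional strictly decreases.\<close>

section \<open>Transport plans\<close>

lemma measurable_fst_borel [measurable]:
  "fst \<in> borel_measurable (borel :: ('a::euclidean_space \<times> 'a) measure)"
  by (intro borel_measurable_continuous_onI continuous_intros)

lemma measurable_snd_borel [measurable]:
  "snd \<in> borel_measurable (borel :: ('a::euclidean_space \<times> 'a) measure)"
  by (intro borel_measurable_continuous_onI continuous_intros)

lemma emeasure_distr_eq_nn_integral:
  assumes "f \<in> measurable M N" "A \<in> sets N"
  shows "emeasure (distr M N f) A = (\<integral>\<^sup>+ x. indicator A (f x) \<partial>M)"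
  using assms by (simp add: nn_integral_distr flip: nn_integral_indicator)

lemma transport_plansD:
  assumes "\<gamma> \<in> transport_plans \<mu> \<nu>"
  shows "sets \<gamma> = sets borel" "space \<gamma> = UNIV" "prob_space \<gamma>"
    and "sets \<mu> = sets borel" "sets \<nu> = sets borel"
    and "distr \<gamma> borel fst = \<mu>" "distr \<gamma> borel snd = \<nu>"
    and "fst \<in> borel_measurable \<gamma>" "snd \<in> borel_measurable \<gamma>"
proof -
  show sets: "sets \<gamma> = sets borel" and "prob_space \<gamma>"
    and marginals: "distr \<gamma> borel fst = \<mu>" "distr \<gamma> borel snd = \<nu>"
    using assms by (auto simp: transport_plans_def)
  show "space \<gamma> = UNIV"
    using sets_eq_imp_space_eq[OF sets] by simp
  show "sets \<mu> = sets borel" "sets \<nu> = sets borel"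
    using marginals by auto
  show "fst \<in> borel_measurable \<gamma>" "snd \<in> borel_measurable \<gamma>"
    by (simp_all add: measurable_cong_sets[OF sets refl])
qed

lemma transport_plan_marginal_eq:
  assumes "\<gamma> \<in> transport_plans \<mu> \<nu>" "A \<in> sets borel"
  shows "(\<integral>\<^sup>+ z. indicator A (fst z) \<partial>\<gamma>) = emeasure \<mu> A"
    and "(\<integral>\<^sup>+ z. indicator A (snd z) \<partial>\<gamma>) = emeasure \<nu> A"
  using transport_plansD[OF assms(1)] assms(2)
  by (metis emeasure_distr_eq_nn_integral sets_borel)+

lemma (in prob_space) distr_pair_snd:
  assumes "sigma_finite_measure N"
  shows "distr (M \<Otimes>\<^sub>M N) N snd = N"
proof (intro measure_eqI)
  interpret N: sigma_finite_measure N by fact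
  fix A assume A: "A \<in> sets (distr (M \<Otimes>\<^sub>M N) N snd)"
  then have "emeasure (distr (M \<Otimes>\<^sub>M N) N snd) A = emeasure (M \<Otimes>\<^sub>M N) (space M \<times> A)"
    by (auto simp: emeasure_distr space_pair_measure dest: sets.sets_into_space
        intro!: arg_cong2[where f=emeasure])
  also have "\<dots> = emeasure N A"
    using A by (simp add: N.emeasure_pair_measure_Times emeasure_space_1)
  finally show "emeasure (distr (M \<Otimes>\<^sub>M N) N snd) A = emeasure N A" .
qed simp

lemma pair_measure_in_transport_plans:
  assumes "\<mu> \<in> probs_on \<Omega>" "\<nu> \<in> probs_on \<Omega>"
  shows "\<mu> \<Otimes>\<^sub>M \<nu> \<in> transport_plans \<mu> \<nu>"
proof -
  interpret \<mu>: prob_space \<mu> using assms(1) by (simp add: probs_on_def)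
  interpret \<nu>: prob_space \<nu> using assms(2) by (simp add: probs_on_def)
  interpret pair_prob_space \<mu> \<nu> ..
  have sets: "sets \<mu> = sets borel" "sets \<nu> = sets borel"
    using assms by (auto simp: probs_on_def)
  have "sets (\<mu> \<Otimes>\<^sub>M \<nu>) = sets (borel :: ('a \<times> 'a) measure)"
    using sets_pair_measure_cong[OF sets] borel_prod by metis
  moreover have "distr (\<mu> \<Otimes>\<^sub>M \<nu>) borel fst = \<mu>"
    using \<nu>.distr_pair_fst by (metis distr_cong sets(1))
  moreover have "distr (\<mu> \<Otimes>\<^sub>M \<nu>) borel snd = \<nu>"
    using \<mu>.distr_pair_snd[OF \<nu>.sigma_finite_measure_axioms] by (metis distr_cong sets(2))
  ultimately show ?thesis
    by (simp add: transport_plans_def prob_space_pair \<mu>.prob_space_axioms \<nu>.prob_space_axioms)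
qed

lemma probs_on_AE:
  "\<mu> \<in> probs_on \<Omega> \<Longrightarrow> \<Omega> \<in> sets borel \<Longrightarrow> AE x in \<mu>. x \<in> \<Omega>"
  by (intro AE_I[of _ _ "UNIV - \<Omega>"]) (auto simp: probs_on_def)

lemma transport_plan_AE_in_domain:
  assumes "\<gamma> \<in> transport_plans \<mu> \<nu>" "\<mu> \<in> probs_on \<Omega>" "\<nu> \<in> probs_on \<Omega>" "\<Omega> \<in> sets borel"
  shows "AE z in \<gamma>. fst z \<in> \<Omega> \<and> snd z \<in> \<Omega>"
proof -
  note \<gamma> = transport_plansD[OF assms(1)]
  have "AE z in \<gamma>. fst z \<in> \<Omega>" "AE z in \<gamma>. snd z \<in> \<Omega>"
    using AE_distrD[OF \<gamma>(8)] AE_distrD[OF \<gamma>(9)] probs_on_AE[OF _ assms(4)] assms(2,3) \<gamma>(6,7)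
    by blast+
  then show ?thesis
    by eventually_elim simp
qed

lemma Tp_le_diameter:
  assumes "\<mu> \<in> probs_on \<Omega>" "\<nu> \<in> probs_on \<Omega>" "\<Omega> \<in> sets borel" "bounded \<Omega>" "p \<ge> 0"
  shows "Tp p \<mu> \<nu> \<le> ennreal (diameter \<Omega> powr p)"
proof -
  let ?\<gamma> = "\<mu> \<Otimes>\<^sub>M \<nu>"
  have plan: "?\<gamma> \<in> transport_plans \<mu> \<nu>"
    using assms(1,2) by (rule pair_measure_in_transport_plans)
  interpret prob_space ?\<gamma>
    using transport_plansD(3)[OF plan] .
  have "Tp p \<mu> \<nu> \<le> (\<integral>\<^sup>+ z. ennreal (dist (fst z) (snd z) powr p) \<partial>?\<gamma>)"
    unfolding Tp_def by (rule INF_lower[OF plan])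
  also have "\<dots> \<le> (\<integral>\<^sup>+ z. ennreal (diameter \<Omega> powr p) \<partial>?\<gamma>)"
    using transport_plan_AE_in_domain[OF plan assms(1-3)]
  proof (intro nn_integral_mono_AE, eventually_elim)
    case (elim z)
    then have "dist (fst z) (snd z) \<le> diameter \<Omega>"
      using diameter_bounded_bound[OF assms(4)] by auto
    then show ?case
      using assms(5) by (intro ennreal_leI powr_mono2) auto
  qed
  also have "\<dots> = ennreal (diameter \<Omega> powr p)"
    by (simp add: emeasure_space_1)
  finally show ?thesis .
qed

section \<open>The energy functional\<close>

lemma strictly_convex_on_mono:
  assumes "strictly_convex_on {0..} f" "\<And>t. 0 \<le> t \<Longrightarrow> f 0 \<le> f t" "0 \<le> x" "x \<le> y"
  shows "f x \<le> f y"
proof (cases "x = 0 \<or> x = y")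
  case True
  then show ?thesis
    using assms(2-4) by auto
next
  case False
  with assms(3,4) have xy: "0 < x" "x < y"
    by auto
  define t where "t = x / y"
  have t: "0 < t" "t < 1" "(1 - t) * 0 + t * y = x"
    using xy by (auto simp: t_def)
  have "f ((1 - t) * 0 + t * y) < (1 - t) * f 0 + t * f y"
    using assms(1)[unfolded strictly_convex_on_def, rule_format, of 0 y t] t(1,2) xy by simp
  then have "f x < (1 - t) * f 0 + t * f y"
    using t(3) by simp
  also have "\<dots> \<le> (1 - t) * f y + t * f y"
    using t assms(2)[of y] xy by (intro add_right_mono mult_left_mono) auto
  also have "\<dots> = f y"
    by (simp add: algebra_simps)
  finally show ?thesis
    by simp
qed

lemma standing_fD:
  assumes "standing_f f"
  shows "f 0 = 0" "\<And>t. 0 \<le> t \<Longrightarrow> 0 \<le> f t"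
    and "\<And>x y. 0 \<le> x \<Longrightarrow> x \<le> y \<Longrightarrow> f x \<le> f y"
    and "(f has_real_derivative 0) (at 0 within {0..})"
    and "continuous_on {0..} f"
proof -
  obtain f' where f': "\<forall>t\<ge>0. (f has_real_derivative f' t) (at t within {0..})" "f' 0 = 0"
    using assms unfolding standing_f_def by blast
  show "f 0 = 0" "\<And>t. 0 \<le> t \<Longrightarrow> 0 \<le> f t"
    using assms unfolding standing_f_def by blast+
  then show "\<And>x y. 0 \<le> x \<Longrightarrow> x \<le> y \<Longrightarrow> f x \<le> f y"
    using assms unfolding standing_f_def by (metis strictly_convex_on_mono)
  show "(f has_real_derivative 0) (at 0 within {0..})"
    using f'(1)[rule_format, of 0] f'(2) by simp
  show "continuous_on {0..} f"
    using f'(1) by (intro DERIV_continuous_on[where D = f']) auto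
qed

lemma little_o_at_0_bound:
  fixes f :: "real \<Rightarrow> real"
  assumes "(f has_real_derivative 0) (at 0 within {0..})" "f 0 = 0" "0 < \<eta>"
  obtains d where "0 < d" "\<And>t. 0 < t \<Longrightarrow> t < d \<Longrightarrow> f t \<le> \<eta> * t"
proof -
  have "((\<lambda>t. f t / t) \<longlongrightarrow> 0) (at 0 within {0..})"
    using assms(1,2) by (simp add: has_field_derivative_iff)
  then have "\<forall>\<^sub>F t in at 0 within {0..}. dist (f t / t) 0 < \<eta>"
    using assms(3) by (rule tendstoD)
  then obtain d where d: "0 < d" "\<And>t. 0 \<le> t \<Longrightarrow> t \<noteq> 0 \<Longrightarrow> dist t 0 < d \<Longrightarrow> \<bar>f t / t\<bar> < \<eta>"
    unfolding eventually_at dist_real_def by (auto simp del: abs_divide)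
  show ?thesis
  proof (rule that[OF d(1)])
    fix t :: real assume "0 < t" "t < d"
    then have "\<bar>f t\<bar> < \<eta> * t"
      using d(2)[of t] by (simp add: divide_less_eq mult.commute)
    then show "f t \<le> \<eta> * t"
      by linarith
  qed
qed

lemma exists_small_scale:
  fixes f :: "real \<Rightarrow> real"
  assumes "(f has_real_derivative 0) (at 0 within {0..})" "f 0 = 0" "0 < C" "0 < \<eta>"
  obtains \<epsilon> where "0 < \<epsilon>" "\<epsilon> \<le> 1" "f (\<epsilon> * C) \<le> \<epsilon> * \<eta>"
proof -
  obtain d where d: "0 < d" "\<And>t. 0 < t \<Longrightarrow> t < d \<Longrightarrow> f t \<le> \<eta> / C * t"
    using little_o_at_0_bound[OF assms(1,2), of "\<eta> / C"] assms(3,4) by auto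
  define \<epsilon> where "\<epsilon> = min 1 (d / (2 * C))"
  have "\<epsilon> * C \<le> d / (2 * C) * C"
    using assms(3) by (intro mult_right_mono) (auto simp: \<epsilon>_def)
  then have \<epsilon>: "0 < \<epsilon>" "\<epsilon> \<le> 1" "\<epsilon> * C < d"
    using d(1) assms(3) by (auto simp: \<epsilon>_def)
  then have "f (\<epsilon> * C) \<le> \<eta> / C * (\<epsilon> * C)"
    using assms(3) by (intro d(2)) simp_all
  also have "\<dots> = \<epsilon> * \<eta>"
    using assms(3) by simp
  finally show ?thesis
    using \<epsilon> that by blast
qed

lemma measurable_comp_continuous_on_nonneg:
  fixes f :: "real \<Rightarrow> real"
  assumes "continuous_on {0..} f" "u \<in> borel_measurable M" "\<And>x. 0 \<le> u x"
  shows "(\<lambda>x. f (u x)) \<in> borel_measurable M"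
proof -
  have "continuous_on UNIV (\<lambda>t. f (max 0 t))"
    by (rule continuous_on_compose2[OF assms(1)]) (auto intro: continuous_intros)
  then have "(\<lambda>x. f (max 0 (u x))) \<in> borel_measurable M"
    using assms(2) borel_measurable_continuous_onI measurable_compose by blast
  then show ?thesis
    using assms(3) by (simp add: max_absorb2)
qed

lemma Fen_density:
  assumes "u \<in> borel_measurable lborel" "\<And>x. 0 \<le> u x"
  shows "Fen f \<Omega> (density lborel (\<lambda>x. ennreal (u x))) = (\<integral>\<^sup>+ x. indicator \<Omega> x * ennreal (f (u x)) \<partial>lborel)"
proof -
  have "(\<integral>\<^sup>+ x. indicator \<Omega> x * ennreal (f (u x)) \<partial>lborel) = (\<integral>\<^sup>+ x. indicator \<Omega> x * ennreal (f (u' x)) \<partial>lborel)"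
    if "u' \<in> borel_measurable lborel" "\<forall>x. 0 \<le> u' x"
      "density lborel (\<lambda>x. ennreal (u x)) = density lborel (\<lambda>x. ennreal (u' x))" for u'
  proof -
    have "AE x in lborel. ennreal (u x) = ennreal (u' x)"
      using that assms by (intro sigma_finite_measure.density_unique[OF sigma_finite_lborel]) auto
    then have "AE x in lborel. u x = u' x"
      by eventually_elim (use that assms in auto)
    then show ?thesis
      by (intro nn_integral_cong_AE) (auto elim: eventually_mono)
  qed
  then show ?thesis
    unfolding Fen_def
    by (intro antisym[OF INF_lower INF_greatest]) (use assms in simp, blast intro: eq_refl)
qed

lemma bounded_domain_closed:
  "bounded_domain \<Omega> \<Longrightarrow> closed \<Omega>"
  by (auto simp: bounded_domain_def)

lemma bounded_domain_measure_pos: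
  assumes "bounded_domain \<Omega>"
  shows "0 < measure lborel \<Omega>"
proof -
  obtain U where U: "open U" "U \<noteq> {}" "\<Omega> = closure U"
    using assms by (auto simp: bounded_domain_def)
  then obtain x e where "0 < e" "ball x e \<subseteq> \<Omega>"
    by (metis all_not_in_conv closure_subset open_contains_ball order_trans)
  moreover have "emeasure lborel \<Omega> < \<infinity>"
    using assms by (intro emeasure_bounded_finite) (simp add: bounded_domain_def)
  ultimately have "measure lborel (ball x e) \<le> measure lborel \<Omega>"
    using U(3) by (intro measure_mono_fmeasurable) (auto simp: fmeasurable_def)
  then show ?thesis
    using \<open>0 < e\<close> content_ball_pos[of e x] by linarith
qed

lemma exists_probs_on_Fen_finite:
  fixes \<Omega> :: "'a::euclidean_space set"
  assumes "bounded_domain \<Omega>"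
  obtains \<mu> where "\<mu> \<in> probs_on \<Omega>" "Fen f \<Omega> \<mu> < \<infinity>"
proof
  define m where "m = measure lborel \<Omega>"
  have m: "0 < m"
    unfolding m_def using assms by (rule bounded_domain_measure_pos)
  have [measurable]: "\<Omega> \<in> sets borel"
    using bounded_domain_closed[OF assms] by simp
  have "emeasure lborel \<Omega> < \<infinity>"
    using assms by (intro emeasure_bounded_finite) (simp add: bounded_domain_def)
  then have \<Omega>: "emeasure lborel \<Omega> = ennreal m"
    unfolding m_def by (intro emeasure_eq_ennreal_measure) simp
  define u where "u x = indicator \<Omega> x / m" for x
  let ?\<mu> = "density lborel (\<lambda>x. ennreal (u x))"
  have u: "ennreal (u x) = ennreal (1 / m) * indicator \<Omega> x" for x
    by (simp add: u_def indicator_def)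
  have "emeasure ?\<mu> (space ?\<mu>) = ennreal (1 / m) * ennreal m"
    using \<Omega> by (simp add: emeasure_density u nn_integral_cmult_indicator)
  also have "\<dots> = 1"
    using m by (simp flip: ennreal_mult)
  finally have "prob_space ?\<mu>"
    by (rule prob_spaceI)
  have "emeasure ?\<mu> (UNIV - \<Omega>) = (\<integral>\<^sup>+ x. ennreal (u x) * indicator (UNIV - \<Omega>) x \<partial>lborel)"
    by (rule emeasure_density) (auto simp: u_def)
  also have "(\<lambda>x. ennreal (u x) * indicator (UNIV - \<Omega>) x) = (\<lambda>x. 0)"
    by (rule ext) (simp add: u_def indicator_def)
  finally have "emeasure ?\<mu> (UNIV - \<Omega>) = 0"
    by simp
  with \<open>prob_space ?\<mu>\<close> show "?\<mu> \<in> probs_on \<Omega>"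
    by (simp add: probs_on_def)
  have "Fen f \<Omega> ?\<mu> \<le> (\<integral>\<^sup>+ x. indicator \<Omega> x * ennreal (f (u x)) \<partial>lborel)"
    unfolding Fen_def using m by (intro INF_lower) (auto simp: u_def)
  also have "\<dots> = (\<integral>\<^sup>+ x. ennreal (f (1 / m)) * indicator \<Omega> x \<partial>lborel)"
    by (intro nn_integral_cong) (simp add: u_def indicator_def)
  also have "\<dots> < \<infinity>"
    using \<Omega> by (simp add: nn_integral_cmult_indicator ennreal_mult_less_top)
  finally show "Fen f \<Omega> ?\<mu> < \<infinity>" .
qed

lemma minimizer_functional_finite:
  fixes \<Omega> :: "'a::euclidean_space set"
  assumes "bounded_domain \<Omega>" "0 \<le> p" "\<nu> \<in> probs_on \<Omega>"
    and "\<forall>\<mu>' \<in> probs_on \<Omega>. functional p f \<Omega> \<nu> \<mu> \<le> functional p f \<Omega> \<nu> \<mu>'"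
  shows "functional p f \<Omega> \<nu> \<mu> < \<infinity>"
proof -
  obtain \<mu>' where \<mu>': "\<mu>' \<in> probs_on \<Omega>" "Fen f \<Omega> \<mu>' < \<infinity>"
    using assms(1) by (rule exists_probs_on_Fen_finite)
  have "Tp p \<mu>' \<nu> < \<infinity>"
    using Tp_le_diameter[OF \<mu>'(1) assms(3) _ _ assms(2)] assms(1) bounded_domain_closed[OF assms(1)]
    by (simp add: bounded_domain_def le_less_trans)
  then have "functional p f \<Omega> \<nu> \<mu>' < \<infinity>"
    using \<mu>'(2) by (simp add: functional_def)
  with assms(4) \<mu>'(1) show ?thesis
    by (blast intro: le_less_trans)
qed

lemma Fen_density_le_outside:
  fixes \<Omega> K :: "'a::euclidean_space set" and u w :: "'a \<Rightarrow> real"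
  assumes f: "standing_f f" and sets: "\<Omega> \<in> sets borel" "K \<in> sets borel"
    and u: "u \<in> borel_measurable lborel" "\<forall>x. 0 \<le> u x"
    and w: "w \<in> borel_measurable lborel" "\<forall>x. 0 \<le> w x"
    and outside: "AE x in lborel. x \<notin> K \<longrightarrow> w x \<le> u x"
    and inside: "AE x in lborel. x \<in> K \<longrightarrow> w x \<le> b"
  shows "Fen f \<Omega> (density lborel (\<lambda>x. ennreal (w x)))
    \<le> Fen f \<Omega> (density lborel (\<lambda>x. ennreal (u x))) + ennreal (f b) * emeasure lborel K"
proof -
  note fD = standing_fD[OF f]
  have "AE x in lborel. indicator \<Omega> x * ennreal (f (w x))
      \<le> indicator \<Omega> x * ennreal (f (u x)) + ennreal (f b) * indicator K x"
    using outside inside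
  proof eventually_elim
    case (elim x)
    show ?case
    proof (cases "x \<in> K")
      case True
      then have "f (w x) \<le> f b"
        using elim w(2) by (intro fD(3)) auto
      with True show ?thesis
        by (auto split: split_indicator intro: ennreal_leI add_increasing)
    next
      case False
      then have "f (w x) \<le> f (u x)"
        using elim w(2) by (intro fD(3)) auto
      then show ?thesis
        by (auto split: split_indicator intro: ennreal_leI add_increasing2)
    qed
  qed
  then have "Fen f \<Omega> (density lborel (\<lambda>x. ennreal (w x)))
      \<le> (\<integral>\<^sup>+ x. indicator \<Omega> x * ennreal (f (u x)) + ennreal (f b) * indicator K x \<partial>lborel)"
    using w by (simp add: Fen_density nn_integral_mono_AE)
  also have "\<dots> = Fen f \<Omega> (density lborel (\<lambda>x. ennreal (u x))) + ennreal (f b) * emeasure lborel K"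
    using measurable_comp_continuous_on_nonneg[OF fD(5) u(1)] u(2) sets
    by (subst nn_integral_add) (simp_all add: Fen_density[OF u(1) u(2)[rule_format]] nn_integral_cmult_indicator)
  finally show ?thesis .
qed

lemma emeasure_density_eq_0:
  assumes "u \<in> borel_measurable lborel" "K \<in> sets borel" "\<And>x. x \<in> K \<Longrightarrow> u x = 0"
  shows "emeasure (density lborel (\<lambda>x. ennreal (u x))) K = 0"
proof -
  have "emeasure (density lborel (\<lambda>x. ennreal (u x))) K = (\<integral>\<^sup>+ x. ennreal (u x) * indicator K x \<partial>lborel)"
    using assms(1,2) by (intro emeasure_density) simp_all
  also have "\<dots> = 0"
    using assms(3) by (auto intro!: nn_integral_zero' split: split_indicator)
  finally show ?thesis .
qed

lemma ennreal_less_of_add_le: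
  fixes x y :: ennreal
  assumes "x + ennreal a \<le> y + ennreal b" "0 \<le> b" "b < a" "y \<noteq> \<infinity>"
  shows "x < y"
proof (rule ccontr)
  assume "\<not> x < y"
  then have "y + ennreal a \<le> y + ennreal b"
    using assms(1) by (meson add_right_mono not_less order_trans)
  with assms(2-4) show False
    by (auto simp: ennreal_add_left_cancel_le top.not_eq_extremum)
qed

lemma AE_le_of_set_nn_integral_le:
  fixes f g :: "'a \<Rightarrow> ennreal"
  assumes borel: "f \<in> borel_measurable M" "g \<in> borel_measurable M"
    and finite: "integral\<^sup>N M g \<noteq> \<infinity>"
    and le: "\<And>A. A \<in> sets M \<Longrightarrow> (\<integral>\<^sup>+ x. f x * indicator A x \<partial>M) \<le> (\<integral>\<^sup>+ x. g x * indicator A x \<partial>M)"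
  shows "AE x in M. f x \<le> g x"
proof -
  let ?P = "\<lambda>f A. \<integral>\<^sup>+ x. f x * indicator A x \<partial>M"
  let ?N = "{x\<in>space M. g x < f x}"
  have N: "?N \<in> sets M"
    using borel by simp
  have "?P g ?N \<le> integral\<^sup>N M g"
    by (intro nn_integral_mono) (auto split: split_indicator)
  then have Pg_finite: "?P g ?N \<noteq> \<infinity>"
    using finite by (auto simp: top_unique)
  then have Pf_finite: "?P f ?N \<noteq> \<infinity>"
    using le[OF N] by (auto simp: top_unique)
  have "?P (\<lambda>x. f x - g x) ?N = (\<integral>\<^sup>+ x. f x * indicator ?N x - g x * indicator ?N x \<partial>M)"
    by (auto intro!: nn_integral_cong simp: indicator_def)
  also have "\<dots> = ?P f ?N - ?P g ?N"
    using borel N Pg_finite by (intro nn_integral_diff) (auto split: split_indicator)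
  also have "\<dots> = 0"
    using le[OF N] Pf_finite by (simp add: diff_eq_0_iff_ennreal less_top)
  finally show ?thesis
    using borel nn_integral_PInf_AE[OF borel(2) finite]
    by (subst (asm) nn_integral_0_iff_AE)
       (auto split: split_indicator simp: not_less ennreal_minus_eq_0)
qed

lemma dominated_measure_has_density:
  fixes M :: "'a::euclidean_space measure"
  assumes sets: "sets M = sets borel"
    and g: "g \<in> borel_measurable borel" "integral\<^sup>N lborel g \<noteq> \<infinity>"
    and le: "\<And>B. B \<in> sets borel \<Longrightarrow> emeasure M B \<le> (\<integral>\<^sup>+ x. g x * indicator B x \<partial>lborel)"
  obtains w where "w \<in> borel_measurable lborel" "\<forall>x. 0 \<le> w x"
    "M = density lborel (\<lambda>x. ennreal (w x))" "AE x in lborel. ennreal (w x) \<le> g x"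
proof -
  have "absolutely_continuous lborel M"
    unfolding absolutely_continuous_def
  proof
    fix B :: "'a set" assume B: "B \<in> null_sets lborel"
    then have "emeasure M B \<le> 0"
      using le[of B] nn_integral_null_set[OF B, of g] null_setsD2[OF B] by (simp add: mult.commute)
    then show "B \<in> null_sets M"
      using B sets by (simp add: null_sets_def)
  qed
  then have density: "density lborel (RN_deriv lborel M) = M"
    using sets by (intro sigma_finite_measure.density_RN_deriv[OF sigma_finite_lborel]) simp_all
  have RN: "RN_deriv lborel M \<in> borel_measurable lborel"
    by simp
  have "AE x in lborel. RN_deriv lborel M x \<le> g x"
  proof (rule AE_le_of_set_nn_integral_le[OF RN _ g(2)])
    fix B :: "'a set" assume "B \<in> sets lborel"
    then show "(\<integral>\<^sup>+ x. RN_deriv lborel M x * indicator B x \<partial>lborel) \<le> (\<integral>\<^sup>+ x. g x * indicator B x \<partial>lborel)"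
      using le[of B] emeasure_density[OF RN, of B] density by simp
  qed (use g in simp)
  moreover have "AE x in lborel. g x \<noteq> \<infinity>"
    using g by (intro nn_integral_PInf_AE) simp_all
  ultimately have RN_real: "AE x in lborel. RN_deriv lborel M x = ennreal (enn2real (RN_deriv lborel M x))"
    by eventually_elim (auto simp: ennreal_enn2real_if top_unique)
  show ?thesis
  proof
    show "(\<lambda>x. enn2real (RN_deriv lborel M x)) \<in> borel_measurable lborel" "\<forall>x. 0 \<le> enn2real (RN_deriv lborel M x)"
      by simp_all
    show "M = density lborel (\<lambda>x. ennreal (enn2real (RN_deriv lborel M x)))"
      using density_cong[OF RN _ RN_real] density by simp
    show "AE x in lborel. ennreal (enn2real (RN_deriv lborel M x)) \<le> g x"
      using \<open>AE x in lborel. RN_deriv lborel M x \<le> g x\<close> RN_real by eventually_elim simp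
  qed
qed

lemma exists_level_set_not_null:
  assumes "E \<in> sets borel" "E \<notin> null_sets lborel" "v \<in> borel_measurable borel" "\<And>x. x \<in> E \<Longrightarrow> 0 < v x"
  obtains a :: real where "0 < a" "{x \<in> E. a \<le> v x} \<notin> null_sets lborel"
proof -
  have "E = (\<Union>k. {x \<in> E. 1 / Suc k \<le> v x})"
  proof (intro equalityI subsetI)
    fix x assume "x \<in> E"
    then obtain k where "inverse (real (Suc k)) < v x"
      using assms(4) reals_Archimedean by blast
    with \<open>x \<in> E\<close> show "x \<in> (\<Union>k. {x \<in> E. 1 / Suc k \<le> v x})"
      by (auto simp: divide_inverse intro!: exI[of _ k])
  qed auto
  moreover have "\<exists>k. {x \<in> E. 1 / Suc k \<le> v x} \<notin> null_sets lborel"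
  proof (rule ccontr)
    assume "\<nexists>k. {x \<in> E. 1 / Suc k \<le> v x} \<notin> null_sets lborel"
    then have "(\<Union>k. {x \<in> E. 1 / Suc k \<le> v x}) \<in> null_sets lborel"
      by (intro null_sets_UN) auto
    with calculation assms(2) show False
      by simp
  qed
  then obtain k where "{x \<in> E. 1 / Suc k \<le> v x} \<notin> null_sets lborel"
    by blast
  then show ?thesis
    by (intro that[of "1 / Suc k"]) simp_all
qed

lemma exists_compact_subset_emeasure_pos:
  fixes E :: "'a::euclidean_space set"
  assumes "E \<in> sets borel" "bounded E" "0 < emeasure lborel E"
  obtains K where "compact K" "K \<subseteq> E" "0 < emeasure lborel K"
proof -
  have E: "emeasure lborel E = ennreal (measure lborel E)"
    using emeasure_bounded_finite[OF assms(2)] by (intro emeasure_eq_ennreal_measure) simp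
  have "E \<in> sets lebesgue"
    using assms(1) by (simp add: sets_completionI_sets)
  moreover have "0 < measure lborel E"
    using assms(3) E by simp
  ultimately obtain K where K: "closed K" "K \<subseteq> E" "E - K \<in> lmeasurable"
    "emeasure lebesgue (E - K) < ennreal (measure lborel E)"
    by (rule sets_lebesgue_inner_closed)
  have K_borel: "K \<in> sets borel"
    using K(1) by (rule borel_closed)
  have less: "emeasure lborel (E - K) < emeasure lborel E"
    using K(4) E emeasure_completion[of "E - K" lborel] assms(1) K_borel by simp
  have subadditive: "emeasure lborel E \<le> emeasure lborel (E - K) + emeasure lborel K"
    using emeasure_subadditive[of "E - K" lborel K] assms(1) K_borel K(2)
    by (simp add: Un_absorb2 Diff_partition)
  have "emeasure lborel K \<noteq> 0"
  proof
    assume "emeasure lborel K = 0"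
    with less subadditive show False
      by simp
  qed
  moreover have "compact K"
    using K(1,2) assms(2) bounded_subset by (auto simp: compact_eq_bounded_closed)
  ultimately show ?thesis
    using that K(2) by (simp add: zero_less_iff_neq_zero)
qed

lemma exists_compact_zero_set:
  fixes \<Omega> :: "'a::euclidean_space set" and u v :: "'a \<Rightarrow> real"
  assumes \<Omega>: "\<Omega> \<in> sets borel" "bounded \<Omega>" and N: "N \<in> null_sets lborel"
    and u: "u \<in> borel_measurable borel" "\<And>x. 0 \<le> u x" "\<not> (AE x in lborel. x \<in> \<Omega> \<longrightarrow> 0 < u x)"
    and v: "v \<in> borel_measurable borel" "AE x in lborel. x \<in> \<Omega> \<longrightarrow> 0 < v x"
      "AE x in lborel. x \<in> \<Omega> \<longrightarrow> \<bar>v x\<bar> \<le> C"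
  obtains K a where "compact K" "K \<subseteq> \<Omega> - N" "0 < emeasure lborel K" "0 < a"
    "\<And>x. x \<in> K \<Longrightarrow> u x = 0 \<and> a \<le> v x \<and> v x \<le> C"
proof -
  have [measurable]: "\<Omega> \<in> sets borel" "N \<in> sets borel" "u \<in> borel_measurable borel" "v \<in> borel_measurable borel"
    using \<Omega>(1) null_setsD2[OF N] u(1) v(1) by simp_all
  define Z where "Z = {x \<in> \<Omega>. u x = 0 \<and> 0 < v x \<and> v x \<le> C} - N"
  have Z_borel: "Z \<in> sets borel"
    unfolding Z_def by measurable
  have Z_not_null: "Z \<notin> null_sets lborel"
  proof
    assume "Z \<in> null_sets lborel"
    then have "AE x in lborel. x \<notin> Z"
      by (rule AE_not_in)
    moreover have "AE x in lborel. x \<notin> N"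
      using N by (rule AE_not_in)
    ultimately have "AE x in lborel. x \<notin> Z \<and> x \<notin> N \<and> (x \<in> \<Omega> \<longrightarrow> 0 < v x \<and> \<bar>v x\<bar> \<le> C)"
      using v(2,3) by (auto simp: AE_conj_iff elim: AE_mp)
    then have "AE x in lborel. x \<in> \<Omega> \<longrightarrow> 0 < u x"
    proof (rule AE_mp, intro AE_I2 impI)
      fix x assume x: "x \<notin> Z \<and> x \<notin> N \<and> (x \<in> \<Omega> \<longrightarrow> 0 < v x \<and> \<bar>v x\<bar> \<le> C)" "x \<in> \<Omega>"
      then have "u x \<noteq> 0"
        unfolding Z_def by auto
      with u(2)[of x] show "0 < u x"
        by simp
    qed
    with u(3) show False ..
  qed
  moreover have "\<And>x. x \<in> Z \<Longrightarrow> 0 < v x"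
    by (simp add: Z_def)
  ultimately obtain a where a: "0 < a" "{x \<in> Z. a \<le> v x} \<notin> null_sets lborel"
    using Z_borel v(1) by (blast intro: exists_level_set_not_null)
  have level_borel: "{x \<in> Z. a \<le> v x} \<in> sets borel"
    using Z_borel by measurable
  moreover have "bounded {x \<in> Z. a \<le> v x}"
    using \<Omega>(2) by (rule bounded_subset) (auto simp: Z_def)
  moreover have "0 < emeasure lborel {x \<in> Z. a \<le> v x}"
    using a(2) level_borel by (simp add: null_sets_def zero_less_iff_neq_zero)
  ultimately obtain K where "compact K" "K \<subseteq> {x \<in> Z. a \<le> v x}" "0 < emeasure lborel K"
    by (rule exists_compact_subset_emeasure_pos)
  then show ?thesis
    using a(1) by (intro that[of K a]) (auto simp: Z_def)
qed

lemma exists_thickening_emeasure_less: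
  fixes K :: "'a::metric_space set"
  assumes "finite_measure M" "sets M = sets borel" "closed K" "K \<noteq> {}" "emeasure M K < c"
  obtains r where "0 < r" "emeasure M {x. infdist x K < r} < c"
proof -
  interpret finite_measure M by fact
  define T where "T n = {x. infdist x K < 1 / Suc n}" for n
  have T_open: "open (T n)" for n
    unfolding T_def by (intro open_Collect_less continuous_intros)
  have "decseq T"
    by (rule decseq_SucI) (auto simp: T_def frac_le elim!: less_le_trans)
  moreover have "(\<Inter>n. T n) = K"
  proof (intro equalityI subsetI)
    fix x assume x: "x \<in> (\<Inter>n. T n)"
    have "infdist x K \<le> 0"
    proof (rule field_le_epsilon)
      fix e :: real assume "0 < e"
      then obtain n where "inverse (real (Suc n)) < e"
        using reals_Archimedean by blast
      moreover have "infdist x K < inverse (real (Suc n))"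
        using x by (auto simp: T_def divide_inverse)
      ultimately show "infdist x K \<le> 0 + e"
        by simp
    qed
    then show "x \<in> K"
      using infdist_nonneg[of x K] in_closure_iff_infdist_zero[OF assms(4)] assms(3)
      by (simp add: closure_closed)
  qed (simp add: T_def)
  ultimately have "(\<lambda>n. emeasure M (T n)) \<longlonglongrightarrow> emeasure M K"
    using T_open assms(2) by (intro Lim_emeasure_decseq[THEN tendsto_cong_limit]) auto
  then have "\<forall>\<^sub>F n in sequentially. emeasure M (T n) < c"
    using assms(5) by (rule order_tendstoD(2))
  then obtain n where "emeasure M (T n) < c"
    by (auto simp: eventually_sequentially)
  then show ?thesis
    by (intro that[of "1 / Suc n"]) (simp_all add: T_def)
qed

lemma emeasure_Int_eq_density_part:
  assumes \<nu>: "\<forall>A \<in> sets borel. emeasure \<nu> A = emeasure \<nu>s A + (\<integral>\<^sup>+ x. indicator (A \<inter> \<Omega>) x * ennreal (v x) \<partial>lborel)"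
    and \<nu>s: "sets \<nu>s = sets borel" "N \<in> sets borel" "emeasure \<nu>s (UNIV - N) = 0"
    and K: "K \<in> sets borel" "K \<subseteq> \<Omega> - N" and B: "B \<in> sets borel"
  shows "emeasure \<nu> (B \<inter> K) = (\<integral>\<^sup>+ x. indicator (B \<inter> K) x * ennreal (v x) \<partial>lborel)"
proof -
  have "emeasure \<nu>s (B \<inter> K) \<le> emeasure \<nu>s (UNIV - N)"
    using K(2) \<nu>s(2) by (intro emeasure_mono) (auto simp: \<nu>s(1))
  moreover have "B \<inter> K \<inter> \<Omega> = B \<inter> K"
    using K(2) by blast
  ultimately show ?thesis
    using \<nu> B K(1) \<nu>s(3) by simp
qed

section \<open>Moving mass onto the diagonal\<close>

text \<open>The plan \<open>(1 - \<epsilon> 1\<^sub>K(y)) \<gamma> + \<epsilon> (y, y)\<^sub>#(1\<^sub>K(y) \<gamma>)\<close>: a coin \<open>moved\<close> decides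
  whether the pair \<open>(x, y)\<close> is kept or replaced by \<open>(y, y)\<close>, so the second marginal is unchanged.\<close>

definition shift_to_diagonal :: "('a::euclidean_space \<times> 'a) measure \<Rightarrow> real \<Rightarrow> 'a set \<Rightarrow> ('a \<times> 'a) measure" where
  "shift_to_diagonal \<gamma> \<epsilon> K = distr
     (density (\<gamma> \<Otimes>\<^sub>M count_space UNIV)
       (\<lambda>(z, moved). ennreal (if moved then \<epsilon> * indicator K (snd z) else 1 - \<epsilon> * indicator K (snd z))))
     borel (\<lambda>(z, moved). if moved then (snd z, snd z) else z)"

lemma nn_integral_shift_to_diagonal:
  fixes \<gamma> :: "('a::euclidean_space \<times> 'a) measure"
  assumes "sets \<gamma> = sets borel" "K \<in> sets borel" "\<phi> \<in> borel_measurable borel"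
  shows "(\<integral>\<^sup>+ z. \<phi> z \<partial>shift_to_diagonal \<gamma> \<epsilon> K) =
    (\<integral>\<^sup>+ z. ennreal (1 - \<epsilon> * indicator K (snd z)) * \<phi> z
            + ennreal (\<epsilon> * indicator K (snd z)) * \<phi> (snd z, snd z) \<partial>\<gamma>)"
proof -
  let ?B = "count_space (UNIV :: bool set)"
  let ?w = "\<lambda>(z, moved). ennreal (if moved then \<epsilon> * indicator K (snd z) else 1 - \<epsilon> * indicator K (snd z))"
  let ?g = "\<lambda>(z :: 'a \<times> 'a, moved). if moved then (snd z, snd z) else z"
  interpret B: sigma_finite_measure ?B
    by (rule sigma_finite_measure_count_space_countable) simp
  have sets: "sets (\<gamma> \<Otimes>\<^sub>M ?B) = sets (borel \<Otimes>\<^sub>M ?B)"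
    by (rule sets_pair_measure_cong[OF assms(1) refl])
  have g: "?g \<in> measurable (\<gamma> \<Otimes>\<^sub>M ?B) borel" and w: "?w \<in> borel_measurable (\<gamma> \<Otimes>\<^sub>M ?B)"
    unfolding measurable_cong_sets[OF sets refl] using assms(2) by measurable
  have \<phi>g: "(\<lambda>w. \<phi> (?g w)) \<in> borel_measurable (\<gamma> \<Otimes>\<^sub>M ?B)"
    using measurable_compose[OF g assms(3)] .
  have "(\<integral>\<^sup>+ z. \<phi> z \<partial>shift_to_diagonal \<gamma> \<epsilon> K) = (\<integral>\<^sup>+ w. \<phi> (?g w) \<partial>density (\<gamma> \<Otimes>\<^sub>M ?B) ?w)"
    unfolding shift_to_diagonal_def using g assms(3) by (intro nn_integral_distr) simp_all
  also have "\<dots> = (\<integral>\<^sup>+ w. ?w w * \<phi> (?g w) \<partial>(\<gamma> \<Otimes>\<^sub>M ?B))"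
    using w \<phi>g by (rule nn_integral_density)
  also have "\<dots> = (\<integral>\<^sup>+ z. \<integral>\<^sup>+ moved. ?w (z, moved) * \<phi> (?g (z, moved)) \<partial>?B \<partial>\<gamma>)"
    using w \<phi>g by (intro B.nn_integral_fst[symmetric] borel_measurable_times_ennreal)
  also have "\<dots> = (\<integral>\<^sup>+ z. ennreal (1 - \<epsilon> * indicator K (snd z)) * \<phi> z
            + ennreal (\<epsilon> * indicator K (snd z)) * \<phi> (snd z, snd z) \<partial>\<gamma>)"
    by (intro nn_integral_cong) (simp add: nn_integral_count_space_finite UNIV_bool add.commute)
  finally show ?thesis .
qed

lemma shift_to_diagonal_in_transport_plans:
  assumes "\<gamma> \<in> transport_plans \<mu> \<nu>" "K \<in> sets borel" "0 \<le> \<epsilon>" "\<epsilon> \<le> 1"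
  shows "shift_to_diagonal \<gamma> \<epsilon> K \<in> transport_plans (distr (shift_to_diagonal \<gamma> \<epsilon> K) borel fst) \<nu>"
proof -
  note \<gamma> = transport_plansD[OF assms(1)]
  interpret prob_space \<gamma>
    by (rule \<gamma>(3))
  let ?S = "shift_to_diagonal \<gamma> \<epsilon> K"
  have sets: "sets ?S = sets borel" and space: "space ?S = UNIV"
    by (simp_all add: shift_to_diagonal_def)
  have weights: "ennreal (1 - \<epsilon> * indicator K y) + ennreal (\<epsilon> * indicator K y) = 1" for y
    using assms(3,4) by (auto split: split_indicator simp flip: ennreal_plus)
  have "emeasure ?S (space ?S) = (\<integral>\<^sup>+ z. 1 \<partial>\<gamma>)"
    using nn_integral_shift_to_diagonal[OF \<gamma>(1) assms(2), of "\<lambda>_. 1"]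
    by (simp add: weights)
  then have "prob_space ?S"
    by (intro prob_spaceI) (simp add: emeasure_space_1)
  moreover have "distr ?S borel snd = \<nu>"
  proof (rule measure_eqI)
    show "sets (distr ?S borel snd) = sets \<nu>"
      using \<gamma>(5) by simp
  next
    fix A assume "A \<in> sets (distr ?S borel snd)"
    then have A: "A \<in> sets borel"
      by simp
    have "emeasure (distr ?S borel snd) A = (\<integral>\<^sup>+ z. indicator A (snd z) \<partial>?S)"
      using A by (simp add: emeasure_distr_eq_nn_integral measurable_cong_sets[OF sets refl])
    also have "\<dots> = (\<integral>\<^sup>+ z. indicator A (snd z) \<partial>\<gamma>)"
      using A by (subst nn_integral_shift_to_diagonal[OF \<gamma>(1) assms(2)])
        (simp_all add: weights flip: distrib_right)
    also have "\<dots> = emeasure \<nu> A"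
      using transport_plan_marginal_eq(2)[OF assms(1) A] .
    finally show "emeasure (distr ?S borel snd) A = emeasure \<nu> A" .
  qed
  ultimately show ?thesis
    using sets by (simp add: transport_plans_def)
qed

lemma emeasure_fst_shift_to_diagonal_le:
  assumes "\<gamma> \<in> transport_plans \<mu> \<nu>" "K \<in> sets borel" "0 \<le> \<epsilon>" "\<epsilon> \<le> 1" "A \<in> sets borel"
  shows "emeasure (distr (shift_to_diagonal \<gamma> \<epsilon> K) borel fst) A \<le> emeasure \<mu> A + ennreal \<epsilon> * emeasure \<nu> (A \<inter> K)"
proof -
  note \<gamma> = transport_plansD[OF assms(1)]
  have "emeasure (distr (shift_to_diagonal \<gamma> \<epsilon> K) borel fst) A
      = (\<integral>\<^sup>+ z. indicator A (fst z) \<partial>shift_to_diagonal \<gamma> \<epsilon> K)"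
    using assms(5) by (intro emeasure_distr_eq_nn_integral) (simp_all add: shift_to_diagonal_def)
  also have "\<dots> = (\<integral>\<^sup>+ z. ennreal (1 - \<epsilon> * indicator K (snd z)) * indicator A (fst z)
          + ennreal (\<epsilon> * indicator K (snd z)) * indicator A (snd z) \<partial>\<gamma>)"
    using assms(5) by (simp add: nn_integral_shift_to_diagonal[OF \<gamma>(1) assms(2)])
  also have "\<dots> \<le> (\<integral>\<^sup>+ z. indicator A (fst z) + ennreal \<epsilon> * indicator (A \<inter> K) (snd z) \<partial>\<gamma>)"
    using assms(3,4) by (intro nn_integral_mono) (auto split: split_indicator intro: ennreal_leI)
  also have "\<dots> = emeasure \<mu> A + ennreal \<epsilon> * emeasure \<nu> (A \<inter> K)"
    using assms(2,5) \<gamma>(8,9)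
    by (simp add: nn_integral_add nn_integral_cmult transport_plan_marginal_eq[OF assms(1)] del: nn_integral_indicator)
  finally show ?thesis .
qed

lemma fst_shift_to_diagonal_in_probs_on:
  assumes "\<gamma> \<in> transport_plans \<mu> \<nu>" "\<mu> \<in> probs_on \<Omega>" "\<Omega> \<in> sets borel"
    and "K \<in> sets borel" "K \<subseteq> \<Omega>" "0 \<le> \<epsilon>" "\<epsilon> \<le> 1"
  shows "distr (shift_to_diagonal \<gamma> \<epsilon> K) borel fst \<in> probs_on \<Omega>"
proof -
  note S = transport_plansD[OF shift_to_diagonal_in_transport_plans[OF assms(1,4,6,7)]]
  have "prob_space (distr (shift_to_diagonal \<gamma> \<epsilon> K) borel fst)"
    using prob_space.prob_space_distr[OF S(3,8)] .
  moreover have "(UNIV - \<Omega>) \<inter> K = {}"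
    using assms(5) by blast
  then have "emeasure (distr (shift_to_diagonal \<gamma> \<epsilon> K) borel fst) (UNIV - \<Omega>) \<le> 0"
    using emeasure_fst_shift_to_diagonal_le[OF assms(1,4,6,7), of "UNIV - \<Omega>"] assms(2,3)
    by (simp add: probs_on_def)
  ultimately show ?thesis
    by (simp add: probs_on_def)
qed

lemma nn_integral_cost_shift_to_diagonal:
  assumes "\<gamma> \<in> transport_plans \<mu> \<nu>" "K \<in> sets borel" "0 \<le> \<epsilon>" "\<epsilon> \<le> 1"
    and c: "c \<in> borel_measurable borel" "\<And>z. 0 \<le> c z" "\<And>y. c (y, y) = 0"
  shows "(\<integral>\<^sup>+ z. ennreal (c z) \<partial>shift_to_diagonal \<gamma> \<epsilon> K)
      + ennreal \<epsilon> * (\<integral>\<^sup>+ z. ennreal (indicator K (snd z) * c z) \<partial>\<gamma>)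
    = (\<integral>\<^sup>+ z. ennreal (c z) \<partial>\<gamma>)"
proof -
  note \<gamma> = transport_plansD[OF assms(1)]
  have [measurable]: "c \<in> borel_measurable \<gamma>" "K \<in> sets borel" "snd \<in> borel_measurable \<gamma>"
    using c(1) assms(2) \<gamma>(9) by (simp_all add: measurable_cong_sets[OF \<gamma>(1) refl])
  have weight: "0 \<le> 1 - \<epsilon> * indicator K y" for y
    using assms(3,4) by (simp split: split_indicator)
  have "(\<integral>\<^sup>+ z. ennreal (c z) \<partial>shift_to_diagonal \<gamma> \<epsilon> K)
      = (\<integral>\<^sup>+ z. ennreal ((1 - \<epsilon> * indicator K (snd z)) * c z) \<partial>\<gamma>)"
    using c weight by (simp add: nn_integral_shift_to_diagonal[OF \<gamma>(1) assms(2)] ennreal_mult)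
  moreover have "ennreal \<epsilon> * (\<integral>\<^sup>+ z. ennreal (indicator K (snd z) * c z) \<partial>\<gamma>)
      = (\<integral>\<^sup>+ z. ennreal (\<epsilon> * indicator K (snd z) * c z) \<partial>\<gamma>)"
    using assms(3) c(2) by (subst nn_integral_cmult[symmetric]) (measurable, simp add: ennreal_mult mult.assoc)
  moreover have "(\<integral>\<^sup>+ z. ennreal (c z) \<partial>\<gamma>) = (\<integral>\<^sup>+ z. ennreal ((1 - \<epsilon> * indicator K (snd z)) * c z)
      + ennreal (\<epsilon> * indicator K (snd z) * c z) \<partial>\<gamma>)"
  proof (intro nn_integral_cong)
    fix z
    have "0 \<le> (1 - \<epsilon> * indicator K (snd z)) * c z" "0 \<le> \<epsilon> * indicator K (snd z) * c z"
      using weight[of "snd z"] c(2)[of z] assms(3) by simp_all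
    then show "ennreal (c z) = ennreal ((1 - \<epsilon> * indicator K (snd z)) * c z) + ennreal (\<epsilon> * indicator K (snd z) * c z)"
      by (simp flip: ennreal_plus add: algebra_simps)
  qed
  ultimately show ?thesis
    by (simp add: nn_integral_add)
qed

lemma Tp_fst_shift_to_diagonal_le:
  fixes \<gamma> :: "('a::euclidean_space \<times> 'a) measure"
  assumes "\<gamma> \<in> transport_plans \<mu> \<nu>" "K \<in> sets borel" "0 \<le> \<epsilon>" "\<epsilon> \<le> 1"
  shows "Tp p (distr (shift_to_diagonal \<gamma> \<epsilon> K) borel fst) \<nu>
      + ennreal \<epsilon> * (\<integral>\<^sup>+ z. ennreal (indicator K (snd z) * dist (fst z) (snd z) powr p) \<partial>\<gamma>)
    \<le> (\<integral>\<^sup>+ z. ennreal (dist (fst z) (snd z) powr p) \<partial>\<gamma>)"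
proof -
  have le: "Tp p (distr (shift_to_diagonal \<gamma> \<epsilon> K) borel fst) \<nu>
      \<le> (\<integral>\<^sup>+ z. ennreal (dist (fst z) (snd z) powr p) \<partial>shift_to_diagonal \<gamma> \<epsilon> K)"
    unfolding Tp_def by (rule INF_lower[OF shift_to_diagonal_in_transport_plans[OF assms]])
  have "(\<lambda>z. dist (fst z) (snd z) powr p) \<in> borel_measurable (borel :: ('a \<times> 'a) measure)"
    by measurable
  then have cost: "(\<integral>\<^sup>+ z. ennreal (dist (fst z) (snd z) powr p) \<partial>shift_to_diagonal \<gamma> \<epsilon> K)
      + ennreal \<epsilon> * (\<integral>\<^sup>+ z. ennreal (indicator K (snd z) * dist (fst z) (snd z) powr p) \<partial>\<gamma>)
    = (\<integral>\<^sup>+ z. ennreal (dist (fst z) (snd z) powr p) \<partial>\<gamma>)"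
    by (intro nn_integral_cost_shift_to_diagonal[OF assms]) simp_all
  have "Tp p (distr (shift_to_diagonal \<gamma> \<epsilon> K) borel fst) \<nu>
      + ennreal \<epsilon> * (\<integral>\<^sup>+ z. ennreal (indicator K (snd z) * dist (fst z) (snd z) powr p) \<partial>\<gamma>)
    \<le> (\<integral>\<^sup>+ z. ennreal (dist (fst z) (snd z) powr p) \<partial>shift_to_diagonal \<gamma> \<epsilon> K)
      + ennreal \<epsilon> * (\<integral>\<^sup>+ z. ennreal (indicator K (snd z) * dist (fst z) (snd z) powr p) \<partial>\<gamma>)"
    by (rule add_right_mono[OF le])
  then show ?thesis
    by (simp only: cost)
qed

lemma emeasure_fst_shift_to_diagonal_le_nn_integral:
  fixes K :: "'a::euclidean_space set"
  assumes \<gamma>: "\<gamma> \<in> transport_plans \<mu> \<nu>"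
    and u: "u \<in> borel_measurable lborel" "\<mu> = density lborel (\<lambda>x. ennreal (u x))"
    and K: "K \<in> sets borel"
    and \<nu>: "\<And>B. B \<in> sets borel \<Longrightarrow> emeasure \<nu> (B \<inter> K) = (\<integral>\<^sup>+ x. indicator (B \<inter> K) x * ennreal (v x) \<partial>lborel)"
    and v: "v \<in> borel_measurable borel"
    and \<epsilon>: "0 \<le> \<epsilon>" "\<epsilon> \<le> 1"
    and B: "B \<in> sets borel"
  shows "emeasure (distr (shift_to_diagonal \<gamma> \<epsilon> K) borel fst) B
    \<le> (\<integral>\<^sup>+ x. (ennreal (u x) + ennreal \<epsilon> * (indicator K x * ennreal (v x))) * indicator B x \<partial>lborel)"
proof -
  have "emeasure (distr (shift_to_diagonal \<gamma> \<epsilon> K) borel fst) B \<le> emeasure \<mu> B + ennreal \<epsilon> * emeasure \<nu> (B \<inter> K)"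
    using \<gamma> K \<epsilon> B by (rule emeasure_fst_shift_to_diagonal_le)
  also have "\<dots> = (\<integral>\<^sup>+ x. ennreal (u x) * indicator B x + ennreal \<epsilon> * (indicator (B \<inter> K) x * ennreal (v x)) \<partial>lborel)"
    using B u v K by (simp add: emeasure_density \<nu> nn_integral_add nn_integral_cmult)
  also have "\<dots> = (\<integral>\<^sup>+ x. (ennreal (u x) + ennreal \<epsilon> * (indicator K x * ennreal (v x))) * indicator B x \<partial>lborel)"
    by (intro nn_integral_cong) (simp add: indicator_def)
  finally show ?thesis .
qed

lemma Fen_fst_shift_to_diagonal_le:
  fixes \<Omega> K :: "'a::euclidean_space set"
  assumes f: "standing_f f" and \<Omega>: "\<Omega> \<in> sets borel" and \<gamma>: "\<gamma> \<in> transport_plans \<mu> \<nu>"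
    and u: "u \<in> borel_measurable lborel" "\<And>x. 0 \<le> u x" "\<mu> = density lborel (\<lambda>x. ennreal (u x))"
    and K: "K \<in> sets borel" "\<And>x. x \<in> K \<Longrightarrow> u x = 0 \<and> v x \<le> C" "0 \<le> C"
    and \<nu>: "\<And>B. B \<in> sets borel \<Longrightarrow> emeasure \<nu> (B \<inter> K) = (\<integral>\<^sup>+ x. indicator (B \<inter> K) x * ennreal (v x) \<partial>lborel)"
    and v: "v \<in> borel_measurable borel"
    and \<epsilon>: "0 \<le> \<epsilon>" "\<epsilon> \<le> 1"
  shows "Fen f \<Omega> (distr (shift_to_diagonal \<gamma> \<epsilon> K) borel fst)
    \<le> Fen f \<Omega> \<mu> + ennreal (f (\<epsilon> * C)) * emeasure lborel K"
proof -
  note plan = transport_plansD[OF \<gamma>]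
  have [measurable]: "u \<in> borel_measurable borel" "K \<in> sets borel"
    using u(1) K(1) by simp_all
  have \<mu>_finite: "emeasure \<mu> UNIV \<noteq> \<infinity>" and \<nu>_finite: "emeasure \<nu> K \<noteq> \<infinity>"
    using prob_space.prob_space_distr[OF plan(3) plan(8)] prob_space.prob_space_distr[OF plan(3) plan(9)]
      plan(6,7) by (auto simp: prob_space_def finite_measure.emeasure_finite)
  define g where "g = (\<lambda>x. ennreal (u x) + ennreal \<epsilon> * (indicator K x * ennreal (v x)))"
  have g_measurable: "g \<in> borel_measurable borel"
    unfolding g_def using v by measurable
  have "integral\<^sup>N lborel g = emeasure \<mu> UNIV + ennreal \<epsilon> * emeasure \<nu> K"
    unfolding g_def using \<nu>[of UNIV] v by (simp add: u(3) emeasure_density nn_integral_add nn_integral_cmult)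
  then have g_finite: "integral\<^sup>N lborel g \<noteq> \<infinity>"
    using \<mu>_finite \<nu>_finite by (simp add: ennreal_mult_eq_top_iff)
  have dominated: "emeasure (distr (shift_to_diagonal \<gamma> \<epsilon> K) borel fst) B \<le> (\<integral>\<^sup>+ x. g x * indicator B x \<partial>lborel)"
    if "B \<in> sets borel" for B
    using emeasure_fst_shift_to_diagonal_le_nn_integral[OF \<gamma> u(1,3) K(1) \<nu> v \<epsilon> that] by (simp add: g_def)
  obtain w where w: "w \<in> borel_measurable lborel" "\<forall>x. 0 \<le> w x"
    "distr (shift_to_diagonal \<gamma> \<epsilon> K) borel fst = density lborel (\<lambda>x. ennreal (w x))"
    "AE x in lborel. ennreal (w x) \<le> g x"
    by (rule dominated_measure_has_density[OF _ g_measurable g_finite dominated]) simp_all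
  have "AE x in lborel. x \<notin> K \<longrightarrow> w x \<le> u x"
    using w(4) by eventually_elim (use w(2) u(2) in \<open>auto simp: g_def\<close>)
  moreover have "AE x in lborel. x \<in> K \<longrightarrow> w x \<le> \<epsilon> * C"
    using w(4)
  proof eventually_elim
    case (elim x)
    show ?case
    proof
      assume "x \<in> K"
      then have "ennreal (w x) \<le> ennreal \<epsilon> * ennreal (v x)"
        using elim K(2)[of x] by (simp add: g_def)
      also have "\<dots> \<le> ennreal \<epsilon> * ennreal C"
        using K(2)[OF \<open>x \<in> K\<close>] by (intro mult_left_mono ennreal_leI) auto
      finally have "ennreal (w x) \<le> ennreal (\<epsilon> * C)"
        using \<epsilon>(1) K(3) by (simp add: ennreal_mult)
      then show "w x \<le> \<epsilon> * C"
        using \<epsilon>(1) K(3) by (simp add: ennreal_le_iff)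
    qed
  qed
  ultimately show ?thesis
    unfolding w(3) u(3) using w(1,2) \<Omega> K(1) u(1,2) by (intro Fen_density_le_outside[OF f]) auto
qed

lemma functional_fst_shift_to_diagonal_le:
  fixes \<Omega> K :: "'a::euclidean_space set"
  assumes f: "standing_f f" and \<Omega>: "\<Omega> \<in> sets borel" and \<gamma>: "\<gamma> \<in> transport_plans \<mu> \<nu>"
    and u: "u \<in> borel_measurable lborel" "\<And>x. 0 \<le> u x" "\<mu> = density lborel (\<lambda>x. ennreal (u x))"
    and K: "K \<in> sets borel" "\<And>x. x \<in> K \<Longrightarrow> u x = 0 \<and> v x \<le> C" "0 \<le> C"
    and \<nu>: "\<And>B. B \<in> sets borel \<Longrightarrow> emeasure \<nu> (B \<inter> K) = (\<integral>\<^sup>+ x. indicator (B \<inter> K) x * ennreal (v x) \<partial>lborel)"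
    and v: "v \<in> borel_measurable borel"
    and \<epsilon>: "0 \<le> \<epsilon>" "\<epsilon> \<le> 1"
  shows "functional p f \<Omega> \<nu> (distr (shift_to_diagonal \<gamma> \<epsilon> K) borel fst)
      + ennreal \<epsilon> * (\<integral>\<^sup>+ z. ennreal (indicator K (snd z) * dist (fst z) (snd z) powr p) \<partial>\<gamma>)
    \<le> (\<integral>\<^sup>+ z. ennreal (dist (fst z) (snd z) powr p) \<partial>\<gamma>)
      + (Fen f \<Omega> \<mu> + ennreal (f (\<epsilon> * C)) * emeasure lborel K)"
  using add_mono[OF Tp_fst_shift_to_diagonal_le[OF \<gamma> K(1) \<epsilon>, of p]
      Fen_fst_shift_to_diagonal_le[OF f \<Omega> \<gamma> u K \<nu> v \<epsilon>]]
  by (simp add: functional_def ac_simps)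

section \<open>Positivity of minimizers\<close>

lemma emeasure_target_le_cost_to_target:
  fixes K :: "'a::euclidean_space set"
  assumes "\<gamma> \<in> transport_plans \<mu> \<nu>" "K \<in> sets borel" "0 < r" "0 \<le> p"
  shows "ennreal (r powr p) * emeasure \<nu> K
    \<le> (\<integral>\<^sup>+ z. ennreal (indicator K (snd z) * dist (fst z) (snd z) powr p) \<partial>\<gamma>)
      + ennreal (r powr p) * emeasure \<mu> {x. infdist x K < r}"
proof -
  note \<gamma> = transport_plansD[OF assms(1)]
  define T where "T = {x. infdist x K < r}"
  have T: "T \<in> sets borel"
    unfolding T_def by (intro borel_open open_Collect_less continuous_intros)
  have [measurable]: "fst \<in> borel_measurable \<gamma>" "snd \<in> borel_measurable \<gamma>" "K \<in> sets borel" "T \<in> sets borel"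
    using \<gamma>(8,9) assms(2) T by simp_all
  have pointwise: "ennreal (r powr p) * indicator K (snd z)
      \<le> ennreal (indicator K (snd z) * dist (fst z) (snd z) powr p) + ennreal (r powr p) * indicator T (fst z)" for z
  proof (cases "snd z \<in> K \<and> fst z \<notin> T")
    case True
    then have "r \<le> dist (fst z) (snd z)"
      using infdist_le[of "snd z" K "fst z"] by (simp add: T_def)
    then have "r powr p \<le> dist (fst z) (snd z) powr p"
      using assms(3,4) by (intro powr_mono2) auto
    with True show ?thesis
      by (simp add: ennreal_leI)
  qed (auto split: split_indicator)
  have "ennreal (r powr p) * emeasure \<nu> K = (\<integral>\<^sup>+ z. ennreal (r powr p) * indicator K (snd z) \<partial>\<gamma>)"
    by (simp add: nn_integral_cmult transport_plan_marginal_eq[OF assms(1,2)] del: nn_integral_indicator)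
  also have "\<dots> \<le> (\<integral>\<^sup>+ z. ennreal (indicator K (snd z) * dist (fst z) (snd z) powr p)
      + ennreal (r powr p) * indicator T (fst z) \<partial>\<gamma>)"
    using pointwise by (rule nn_integral_mono)
  also have "\<dots> = (\<integral>\<^sup>+ z. ennreal (indicator K (snd z) * dist (fst z) (snd z) powr p) \<partial>\<gamma>)
      + ennreal (r powr p) * emeasure \<mu> T"
    by (simp add: nn_integral_add nn_integral_cmult transport_plan_marginal_eq[OF assms(1) T]
        del: nn_integral_indicator)
  finally show ?thesis
    by (simp add: T_def)
qed

lemma exists_cost_to_target_lower_bound:
  fixes K :: "'a::euclidean_space set"
  assumes \<mu>: "finite_measure \<mu>" "sets \<mu> = sets borel" "emeasure \<mu> K = 0"
    and K: "compact K" "K \<noteq> {}" and \<nu>: "0 < m" "ennreal m \<le> emeasure \<nu> K" and "0 \<le> p"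
  obtains c where "0 < c"
    "\<forall>\<gamma> \<in> transport_plans \<mu> \<nu>.
      ennreal c \<le> (\<integral>\<^sup>+ z. ennreal (indicator K (snd z) * dist (fst z) (snd z) powr p) \<partial>\<gamma>)"
proof -
  have "emeasure \<mu> K < ennreal (m / 2)"
    using \<mu>(3) \<nu>(1) by simp
  then obtain r where r: "0 < r" "emeasure \<mu> {x. infdist x K < r} < ennreal (m / 2)"
    by (rule exists_thickening_emeasure_less[OF \<mu>(1,2) compact_imp_closed[OF K(1)] K(2)])
  define c where "c = r powr p * m / 2"
  show ?thesis
  proof
    show "0 < c"
      using r(1) \<nu>(1) by (simp add: c_def)
  next
    show "\<forall>\<gamma> \<in> transport_plans \<mu> \<nu>.
      ennreal c \<le> (\<integral>\<^sup>+ z. ennreal (indicator K (snd z) * dist (fst z) (snd z) powr p) \<partial>\<gamma>)"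
    proof
    fix \<gamma> assume \<gamma>: "\<gamma> \<in> transport_plans \<mu> \<nu>"
    let ?I = "\<integral>\<^sup>+ z. ennreal (indicator K (snd z) * dist (fst z) (snd z) powr p) \<partial>\<gamma>"
    have "ennreal c + ennreal c = ennreal (r powr p) * ennreal m"
      using \<nu>(1) by (simp add: c_def flip: ennreal_plus ennreal_mult)
    also have "\<dots> \<le> ennreal (r powr p) * emeasure \<nu> K"
      using \<nu>(2) by (rule mult_left_mono) simp
    also have "\<dots> \<le> ?I + ennreal (r powr p) * emeasure \<mu> {x. infdist x K < r}"
      using \<gamma> borel_compact[OF K(1)] r(1) \<open>0 \<le> p\<close> by (rule emeasure_target_le_cost_to_target)
    also have "\<dots> \<le> ?I + ennreal (r powr p) * ennreal (m / 2)"
      using r(2) by (intro add_left_mono mult_left_mono) simp_all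
    also have "\<dots> = ennreal c + ?I"
      using \<nu>(1) by (simp add: c_def add.commute flip: ennreal_mult)
    finally show "ennreal c \<le> ?I"
      by (simp add: ennreal_add_left_cancel_le)
    qed
  qed
qed

lemma exists_cost_to_zero_set_lower_bound:
  fixes K :: "'a::euclidean_space set" and u v :: "'a \<Rightarrow> real"
  assumes \<mu>: "prob_space \<mu>" "u \<in> borel_measurable lborel" "\<mu> = density lborel (\<lambda>x. ennreal (u x))"
    and \<nu>: "\<And>B. B \<in> sets borel \<Longrightarrow> emeasure \<nu> (B \<inter> K) = (\<integral>\<^sup>+ x. indicator (B \<inter> K) x * ennreal (v x) \<partial>lborel)"
    and K: "compact K" "0 < emeasure lborel K" "0 < a" "\<And>x. x \<in> K \<Longrightarrow> u x = 0 \<and> a \<le> v x"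
    and p: "0 \<le> p"
  obtains c where "0 < c"
    "\<forall>\<gamma> \<in> transport_plans \<mu> \<nu>.
      ennreal c \<le> (\<integral>\<^sup>+ z. ennreal (indicator K (snd z) * dist (fst z) (snd z) powr p) \<partial>\<gamma>)"
proof -
  have K_borel: "K \<in> sets borel"
    using K(1) by (rule borel_compact)
  define mK where "mK = measure lborel K"
  have mK: "emeasure lborel K = ennreal mK" "0 < mK"
    using K(2) emeasure_compact_finite[OF K(1)] by (auto simp: mK_def emeasure_eq_ennreal_measure)
  then have "K \<noteq> {}" "0 < a * mK"
    using K(3) by auto
  have "ennreal (a * mK) = (\<integral>\<^sup>+ x. ennreal a * indicator K x \<partial>lborel)"
    using K(3) K_borel mK by (simp add: ennreal_mult nn_integral_cmult_indicator)
  also have "\<dots> \<le> emeasure \<nu> K"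
    using \<nu>[of UNIV] K(4) by (auto intro!: nn_integral_mono ennreal_leI split: split_indicator)
  finally have \<nu>K: "ennreal (a * mK) \<le> emeasure \<nu> K" .
  have \<mu>K: "emeasure \<mu> K = 0"
    unfolding \<mu>(3) using K(4) by (intro emeasure_density_eq_0[OF \<mu>(2) K_borel]) blast
  have "sets \<mu> = sets borel"
    by (simp add: \<mu>(3))
  from this \<open>K \<noteq> {}\<close> \<open>0 < a * mK\<close> show ?thesis
    by (rule exists_cost_to_target_lower_bound[OF prob_space.finite_measure[OF \<mu>(1)] _ \<mu>K K(1) _ _ \<nu>K p])
      (rule that)
qed

lemma exists_better_competitor:
  fixes \<Omega> K :: "'a::euclidean_space set" and u v :: "'a \<Rightarrow> real"
  assumes f: "standing_f f" and p: "0 \<le> p" and \<Omega>: "\<Omega> \<in> sets borel"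
    and \<mu>: "\<mu> \<in> probs_on \<Omega>" "u \<in> borel_measurable lborel" "\<And>x. 0 \<le> u x"
      "\<mu> = density lborel (\<lambda>x. ennreal (u x))"
    and \<nu>: "\<And>B. B \<in> sets borel \<Longrightarrow> emeasure \<nu> (B \<inter> K) = (\<integral>\<^sup>+ x. indicator (B \<inter> K) x * ennreal (v x) \<partial>lborel)"
    and v: "v \<in> borel_measurable borel"
    and K: "compact K" "K \<subseteq> \<Omega>" "0 < emeasure lborel K" "0 < a"
      "\<And>x. x \<in> K \<Longrightarrow> u x = 0 \<and> a \<le> v x \<and> v x \<le> C"
    and finite: "functional p f \<Omega> \<nu> \<mu> < \<infinity>"
  obtains \<mu>' where "\<mu>' \<in> probs_on \<Omega>" "functional p f \<Omega> \<nu> \<mu>' < functional p f \<Omega> \<nu> \<mu>"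
proof -
  have K_borel: "K \<in> sets borel"
    using K(1) by (rule borel_compact)
  obtain y where "y \<in> K"
    using K(3) by fastforce
  then have C: "0 < C"
    using K(4,5) by force
  obtain c where c: "0 < c"
    "\<forall>\<gamma> \<in> transport_plans \<mu> \<nu>.
      ennreal c \<le> (\<integral>\<^sup>+ z. ennreal (indicator K (snd z) * dist (fst z) (snd z) powr p) \<partial>\<gamma>)"
    by (rule exists_cost_to_zero_set_lower_bound[OF _ \<mu>(2,4) \<nu> K(1,3,4) _ p])
      (use \<mu>(1) K(5) in \<open>auto simp: probs_on_def\<close>)
  define mK where "mK = measure lborel K"
  have mK: "emeasure lborel K = ennreal mK" "0 < mK"
    using K(3) emeasure_compact_finite[OF K(1)] by (auto simp: mK_def emeasure_eq_ennreal_measure)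
  obtain \<epsilon> where \<epsilon>: "0 < \<epsilon>" "\<epsilon> \<le> 1" "f (\<epsilon> * C) \<le> \<epsilon> * (c / (4 * mK))"
    by (rule exists_small_scale[OF standing_fD(4,1)[OF f] C, of "c / (4 * mK)"]) (use c(1) mK(2) in simp)
  define \<delta> where "\<delta> = \<epsilon> * c / 4"
  have "Tp p \<mu> \<nu> < Tp p \<mu> \<nu> + ennreal \<delta>"
    using finite \<epsilon>(1) c(1) by (simp add: functional_def \<delta>_def ennreal_add_left_cancel_less less_top)
  then obtain \<gamma> where \<gamma>: "\<gamma> \<in> transport_plans \<mu> \<nu>"
    "(\<integral>\<^sup>+ z. ennreal (dist (fst z) (snd z) powr p) \<partial>\<gamma>) < Tp p \<mu> \<nu> + ennreal \<delta>"
    unfolding Tp_def by (auto simp: INF_less_iff)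
  define \<mu>' where "\<mu>' = distr (shift_to_diagonal \<gamma> \<epsilon> K) borel fst"
  have "functional p f \<Omega> \<nu> \<mu>' + ennreal (\<epsilon> * c)
      \<le> functional p f \<Omega> \<nu> \<mu>' + ennreal \<epsilon> * (\<integral>\<^sup>+ z. ennreal (indicator K (snd z) * dist (fst z) (snd z) powr p) \<partial>\<gamma>)"
    using c \<gamma>(1) \<epsilon>(1) by (simp add: ennreal_mult add_left_mono mult_left_mono)
  also have "\<dots> \<le> (\<integral>\<^sup>+ z. ennreal (dist (fst z) (snd z) powr p) \<partial>\<gamma>)
      + (Fen f \<Omega> \<mu> + ennreal (f (\<epsilon> * C)) * emeasure lborel K)"
    unfolding \<mu>'_def using C K(5) \<epsilon>(1,2)
    by (intro functional_fst_shift_to_diagonal_le[OF f \<Omega> \<gamma>(1) \<mu>(2,3,4) K_borel _ _ \<nu> v]) auto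
  also have "\<dots> \<le> (Tp p \<mu> \<nu> + ennreal \<delta>) + (Fen f \<Omega> \<mu> + ennreal \<delta>)"
    using \<gamma>(2) \<epsilon> mK standing_fD(2)[OF f, of "\<epsilon> * C"] C
    by (intro add_mono add_left_mono) (simp_all add: \<delta>_def ennreal_mult[symmetric] ennreal_leI field_simps)
  also have "\<dots> = functional p f \<Omega> \<nu> \<mu> + ennreal (2 * \<delta>)"
    using \<epsilon>(1) c(1) by (simp add: functional_def \<delta>_def ac_simps flip: ennreal_plus)
  finally have decrease: "functional p f \<Omega> \<nu> \<mu>' + ennreal (\<epsilon> * c) \<le> functional p f \<Omega> \<nu> \<mu> + ennreal (2 * \<delta>)" .
  show ?thesis
  proof
    show "\<mu>' \<in> probs_on \<Omega>"
      unfolding \<mu>'_def using \<gamma>(1) \<mu>(1) \<Omega> K_borel K(2) \<epsilon>(1,2)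
      by (intro fst_shift_to_diagonal_in_probs_on) simp_all
    show "functional p f \<Omega> \<nu> \<mu>' < functional p f \<Omega> \<nu> \<mu>"
      by (rule ennreal_less_of_add_le[OF decrease]) (use \<epsilon>(1) c(1) finite in \<open>auto simp: \<delta>_def\<close>)
  qed
qed

theorem lemma3p2:
  fixes \<Omega> :: "'a::euclidean_space set" and p :: real and f :: "real \<Rightarrow> real"
    and \<nu> \<nu>s \<mu> :: "'a measure" and v u :: "'a \<Rightarrow> real"
  assumes "bounded_domain \<Omega>" and "p \<ge> 1" and "standing_f f"
    and "\<nu> \<in> probs_on \<Omega>"
    and "sets \<nu>s = sets borel" and "singular_lebesgue \<nu>s"
    and "v \<in> borel_measurable lborel"
    and "\<exists>C. AE x in lborel. x \<in> \<Omega> \<longrightarrow> \<bar>v x\<bar> \<le> C"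
    and "AE x in lborel. x \<in> \<Omega> \<longrightarrow> v x > 0"
    and "\<forall>A \<in> sets borel. emeasure \<nu> A =
            emeasure \<nu>s A + (\<integral>\<^sup>+ x. indicator (A \<inter> \<Omega>) x * ennreal (v x) \<partial>lborel)"
    and "u \<in> borel_measurable lborel" and "\<forall>x. u x \<ge> 0"
    and "\<mu> = density lborel (\<lambda>x. ennreal (u x))"
    and "\<mu> \<in> probs_on \<Omega>"
    and "\<forall>\<mu>' \<in> probs_on \<Omega>. functional p f \<Omega> \<nu> \<mu> \<le> functional p f \<Omega> \<nu> \<mu>'"
  shows "AE x in lborel. x \<in> \<Omega> \<longrightarrow> u x > 0"
proof (rule ccontr)
  assume not_pos: "\<not> (AE x in lborel. x \<in> \<Omega> \<longrightarrow> u x > 0)"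
  have \<Omega>: "\<Omega> \<in> sets borel" "bounded \<Omega>"
    using assms(1) bounded_domain_closed by (auto simp: bounded_domain_def)
  obtain N where N: "N \<in> null_sets lborel" "N \<in> sets borel" "emeasure \<nu>s (UNIV - N) = 0"
    using assms(6) by (auto simp: singular_lebesgue_def)
  obtain C where C: "AE x in lborel. x \<in> \<Omega> \<longrightarrow> \<bar>v x\<bar> \<le> C"
    using assms(8) by blast
  obtain K a where K: "compact K" "K \<subseteq> \<Omega> - N" "0 < emeasure lborel K" "0 < a"
    "\<And>x. x \<in> K \<Longrightarrow> u x = 0 \<and> a \<le> v x \<and> v x \<le> C"
    using exists_compact_zero_set[OF \<Omega> N(1) _ _ not_pos _ assms(9) C] assms(7,11,12) by auto
  have \<nu>K: "emeasure \<nu> (B \<inter> K) = (\<integral>\<^sup>+ x. indicator (B \<inter> K) x * ennreal (v x) \<partial>lborel)"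
    if "B \<in> sets borel" for B
    using assms(10,5) N(2,3) borel_compact[OF K(1)] K(2) that by (rule emeasure_Int_eq_density_part)
  have "0 \<le> p"
    using assms(2) by simp
  moreover have "v \<in> borel_measurable borel"
    using assms(7) by simp
  moreover have "K \<subseteq> \<Omega>"
    using K(2) by blast
  ultimately obtain \<mu>' where "\<mu>' \<in> probs_on \<Omega>" "functional p f \<Omega> \<nu> \<mu>' < functional p f \<Omega> \<nu> \<mu>"
    using exists_better_competitor[OF assms(3) _ \<Omega>(1) assms(14,11) _ assms(13) \<nu>K _ K(1) _ K(3-5)]
      minimizer_functional_finite[OF assms(1) _ assms(4,15)] assms(12) by blast
  with assms(15) show False
    by (simp add: not_le[symmetric])
qed

end
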